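(* Let $X$ be a compact space and $\mathcal{A}$ a dense subspace of $C(X)$ (real continuous functions, supremum norm) containing the constant functions and closed under finite lattice operations ($f,g\in\mathcal{A}\Rightarrow f\vee g\in\mathcal{A}$). Let $L$ be a Lip-norm on $\mathcal{A}$ satisfying $L(f\vee g)\le L(f)\vee L(g)$ for all $f,g\in\mathcal{A}$, and let $\bar L$ be its closure on $C(X)$. Let $\mathcal{F}$ be a nonempty norm-bounded subset of $\mathcal{A}$ for which there is a constant $k$ with $L(f)\le k$ for all $f\in\mathcal{F}$, and let $g=\sup\{f: f\in\mathcal{F}\}$ (pointwise). Then $g\in C(X)$ and $\bar L(g)\le k$.
   Context: $\mathcal{A}$ is an order-unit space with order unit $1$ and the supremum norm. A Lip-norm on $\mathcal{A}$ is a finite-valued seminorm $L$ with: (1) $L(f)=0$ iff $f$ is constant; (2) $\{f\in\mathcal{A}:L(f)\le1\}$ is norm-closed in $\mathcal{A}$; (3) the image of $\{f:L(f)\le1\}$ in $\mathcal{A}/\mathbb{R}1$ is totally bounded for the quotient norm. The closure $\bar L$: with $\bar{\mathcal{L}}_1$ the closure in $C(X)$ of $\{f\in\mathcal{A}:L(f)\le1\}$, $\bar L(h)=\inf\{r\ge0:h\in r\bar{\mathcal{L}}_1\}\in[0,+\infty]$. *)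

theory Defs
  imports "HOL-Analysis.Analysis"
begin

text \<open>The compact space X is the universe of a topological type 'a with compact UNIV.
  C(X) is the set of continuous real functions on it, with the supremum norm.\<close>

definition CX :: "('a::topological_space \<Rightarrow> real) set" where
  "CX = {f. continuous_on UNIV f}"

definition sup_norm :: "('a \<Rightarrow> real) \<Rightarrow> real" where
  "sup_norm f = (SUP x. \<bar>f x\<bar>)"

text \<open>Lip-norm on the (order-unit) space A, cf. the context: finite-valued seminorm,
  kernel = constants, unit ball norm-closed in A, image of unit ball in A / R1 totally
  bounded for the quotient norm.\<close>

definition lip_norm :: "('a \<Rightarrow> real) set \<Rightarrow> (('a \<Rightarrow> real) \<Rightarrow> real) \<Rightarrow> bool" where
  "lip_norm A L \<longleftrightarrow>
     (\<forall>f\<in>A. 0 \<le> L f) \<and>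
     (\<forall>f\<in>A. \<forall>g\<in>A. L (\<lambda>x. f x + g x) \<le> L f + L g) \<and>
     (\<forall>f\<in>A. \<forall>c::real. L (\<lambda>x. c * f x) = \<bar>c\<bar> * L f) \<and>
     (\<forall>f\<in>A. L f = 0 \<longleftrightarrow> (\<exists>c. f = (\<lambda>x. c))) \<and>
     (\<forall>f\<in>A. (\<forall>e>0. \<exists>h\<in>A. L h \<le> 1 \<and> sup_norm (\<lambda>x. h x - f x) < e) \<longrightarrow> L f \<le> 1) \<and>
     (\<forall>e>0. \<exists>F. finite F \<and> F \<subseteq> {f\<in>A. L f \<le> 1} \<and>
        (\<forall>f\<in>A. L f \<le> 1 \<longrightarrow>
           (\<exists>h\<in>F. \<exists>c::real. sup_norm (\<lambda>x. f x - h x - c) < e)))"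

definition L1bar :: "('a::topological_space \<Rightarrow> real) set \<Rightarrow> (('a \<Rightarrow> real) \<Rightarrow> real) \<Rightarrow> ('a \<Rightarrow> real) set" where
  "L1bar A L = {h\<in>CX. \<forall>e>0. \<exists>f\<in>A. L f \<le> 1 \<and> sup_norm (\<lambda>x. f x - h x) < e}"

definition Lbar :: "('a::topological_space \<Rightarrow> real) set \<Rightarrow> (('a \<Rightarrow> real) \<Rightarrow> real) \<Rightarrow> ('a \<Rightarrow> real) \<Rightarrow> ereal" where
  "Lbar A L h = Inf {ereal r | r. 0 \<le> r \<and> h \<in> (\<lambda>f x. r * f x) ` L1bar A L}"

end

theory Submission
  imports Defs
begin

text \<open>The bounds \<open>L f \<le> k\<close> and \<open>\<parallel>f\<parallel> \<le> B\<close> make \<open>\<F>\<close> totally bounded in \<open>C(X)\<close>: after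
  scaling into the \<open>L\<close>-unit ball, the Lip-norm condition gives a finite net up to additive
  constants, and these constants range over a bounded interval. So for every \<open>e > 0\<close> there is
  a finite \<open>e\<close>-net \<open>S \<subseteq> \<F>\<close>. The pointwise maximum of \<open>S\<close> lies in \<open>A\<close>, has \<open>L \<le> k\<close> by the
  lattice inequality for \<open>L\<close>, and is uniformly within \<open>e\<close> of \<open>g\<close>. Hence \<open>g\<close> is a uniform
  limit of elements of \<open>A\<close> with \<open>L \<le> k\<close>: it is continuous, and \<open>g/r\<close> lies in \<open>L1bar\<close> for
  every \<open>r > k\<close>.\<close>

lemma lip_norm_nonneg: "lip_norm A L \<Longrightarrow> f \<in> A \<Longrightarrow> 0 \<le> L f"
  unfolding lip_norm_def by blast

lemma lip_norm_scale: "lip_norm A L \<Longrightarrow> f \<in> A \<Longrightarrow> L (\<lambda>x. c * f x) = \<bar>c\<bar> * L f"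
  unfolding lip_norm_def by blast

lemma lip_norm_finite_net_mod_constants:
  assumes "lip_norm A L" "d > 0"
  obtains F0 where "finite F0" "F0 \<subseteq> {f\<in>A. L f \<le> 1}"
    "\<And>f. f \<in> A \<Longrightarrow> L f \<le> 1 \<Longrightarrow> \<exists>h\<in>F0. \<exists>c. sup_norm (\<lambda>x. f x - h x - c) < d"
proof -
  have "\<forall>e>0. \<exists>F. finite F \<and> F \<subseteq> {f\<in>A. L f \<le> 1} \<and>
      (\<forall>f\<in>A. L f \<le> 1 \<longrightarrow> (\<exists>h\<in>F. \<exists>c::real. sup_norm (\<lambda>x. f x - h x - c) < e))"
    using assms(1) unfolding lip_norm_def by (elim conjE)
  from this[rule_format, OF assms(2)] obtain F0 where "finite F0" "F0 \<subseteq> {f\<in>A. L f \<le> 1}"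
      "\<forall>f\<in>A. L f \<le> 1 \<longrightarrow> (\<exists>h\<in>F0. \<exists>c::real. sup_norm (\<lambda>x. f x - h x - c) < d)"
    by blast
  then show ?thesis
    by (intro that) auto
qed

lemma abs_le_sup_norm:
  assumes "compact (UNIV :: 'a::topological_space set)" "continuous_on UNIV (u :: 'a \<Rightarrow> real)"
  shows "\<bar>u x\<bar> \<le> sup_norm u"
proof -
  have "bounded (range u)"
    using assms by (intro compact_imp_bounded compact_continuous_image)
  then obtain a where "\<forall>y\<in>range u. \<bar>y\<bar> \<le> a"
    unfolding bounded_real by blast
  then have "bdd_above (range (\<lambda>x. \<bar>u x\<bar>))"
    by (auto intro!: bdd_aboveI[of _ a])
  then show ?thesis
    unfolding sup_norm_def by (intro cSUP_upper) auto
qed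

lemma sup_norm_le: "(\<And>x. \<bar>u x\<bar> \<le> b) \<Longrightarrow> sup_norm u \<le> b"
  unfolding sup_norm_def by (rule cSUP_least) auto

lemma abs_diff_less_if_floor_divide_eq:
  fixes a b d :: real
  assumes "d > 0" "\<lfloor>a / d\<rfloor> = \<lfloor>b / d\<rfloor>"
  shows "\<bar>a - b\<bar> < d"
proof -
  have "\<bar>a / d - b / d\<bar> < 1"
    using assms(2) floor_correct[of "a / d"] floor_correct[of "b / d"] by linarith
  then show ?thesis
    using assms(1) by (simp add: diff_divide_distrib[symmetric])
qed

lemma finite_net_by_key:
  assumes "finite (key ` F)"
    and "\<And>f f'. f \<in> F \<Longrightarrow> f' \<in> F \<Longrightarrow> key f = key f' \<Longrightarrow> P f f'"
  shows "\<exists>S. finite S \<and> S \<subseteq> F \<and> (\<forall>f\<in>F. \<exists>f'\<in>S. P f f')"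
proof (intro exI conjI)
  let ?S = "inv_into F key ` key ` F"
  show "finite ?S" "?S \<subseteq> F"
    using assms(1) by (auto intro: inv_into_into)
  show "\<forall>f\<in>F. \<exists>f'\<in>?S. P f f'"
  proof
    fix f assume "f \<in> F"
    then have "inv_into F key (key f) \<in> F" "key f = key (inv_into F key (key f))"
      by (auto intro: inv_into_into simp: f_inv_into_f)
    then show "\<exists>f'\<in>?S. P f f'"
      using assms(2) \<open>f \<in> F\<close> by blast
  qed
qed

lemma finite_net_of_shifted_net:
  fixes F H :: "('a \<Rightarrow> real) set"
  assumes "finite H" "d > 0"
    and bounded: "\<And>f x. f \<in> F \<Longrightarrow> \<bar>f x\<bar> \<le> B"
    and shifted: "\<And>f. f \<in> F \<Longrightarrow> \<exists>h\<in>H. \<exists>c. \<forall>x. \<bar>f x - h x - c\<bar> < d"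
  shows "\<exists>S. finite S \<and> S \<subseteq> F \<and> (\<forall>f\<in>F. \<exists>f'\<in>S. \<forall>x. \<bar>f x - f' x\<bar> < 3 * d)"
proof -
  obtain hf cf where hf: "\<And>f. f \<in> F \<Longrightarrow> hf f \<in> H"
    and cf: "\<And>f x. f \<in> F \<Longrightarrow> \<bar>f x - hf f x - cf f\<bar> < d"
    using shifted by metis
  fix x0 :: 'a
  define K where "K = B + (\<Sum>h\<in>H. \<bar>h x0\<bar>) + d"
  have cf_bound: "\<bar>cf f\<bar> \<le> K" if "f \<in> F" for f
  proof -
    have "\<bar>hf f x0\<bar> \<le> (\<Sum>h\<in>H. \<bar>h x0\<bar>)"
      using \<open>finite H\<close> hf[OF that] by (intro member_le_sum) auto
    then show ?thesis
      using bounded[OF that, of x0] cf[OF that, of x0] unfolding K_def by linarith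
  qed
  define N where "N = \<lceil>K / d\<rceil>"
  define key where "key f = (hf f, \<lfloor>cf f / d\<rfloor>)" for f
  have "key ` F \<subseteq> H \<times> {-N..N}"
  proof (rule image_subsetI)
    fix f assume "f \<in> F"
    then have "\<bar>cf f / d\<bar> \<le> K / d"
      using cf_bound \<open>d > 0\<close> by (simp add: divide_right_mono)
    then have "- N \<le> \<lfloor>cf f / d\<rfloor>" "\<lfloor>cf f / d\<rfloor> \<le> N"
      unfolding N_def by linarith+
    then show "key f \<in> H \<times> {-N..N}"
      using hf[OF \<open>f \<in> F\<close>] unfolding key_def by auto
  qed
  then have fin: "finite (key ` F)"
    by (rule finite_subset) (simp add: \<open>finite H\<close>)
  have close: "\<bar>f x - f' x\<bar> < 3 * d"
    if "f \<in> F" "f' \<in> F" "key f = key f'" for f f' x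
  proof -
    have "hf f = hf f'" "\<bar>cf f - cf f'\<bar> < d"
      using that(3) abs_diff_less_if_floor_divide_eq[OF \<open>d > 0\<close>] unfolding key_def by auto
    then show ?thesis
      using cf[OF that(1), of x] cf[OF that(2), of x] by simp
  qed
  show ?thesis
    by (rule finite_net_by_key[OF fin]) (use close in blast)
qed

lemma lip_norm_finite_net:
  fixes F :: "('a::topological_space \<Rightarrow> real) set"
  assumes X_compact: "compact (UNIV :: 'a set)"
    and A_sub: "A \<subseteq> CX"
    and A_scale: "\<And>f c. f \<in> A \<Longrightarrow> (\<lambda>x. c * f x) \<in> A"
    and L_lip: "lip_norm A L"
    and F_sub: "F \<subseteq> A"
    and F_bounded: "\<And>f x. f \<in> F \<Longrightarrow> \<bar>f x\<bar> \<le> B"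
    and F_L: "\<And>f. f \<in> F \<Longrightarrow> L f \<le> k"
    and "e > 0"
  shows "\<exists>S. finite S \<and> S \<subseteq> F \<and> (\<forall>f\<in>F. \<exists>f'\<in>S. \<forall>x. \<bar>f x - f' x\<bar> < e)"
proof -
  define s where "s = max k 1"
  define d where "d = e / (3 * s)"
  have "s > 0" "k \<le> s" "d > 0" "3 * (s * d) = e"
    using \<open>e > 0\<close> unfolding s_def d_def by auto
  obtain F0 where F0: "finite F0" "F0 \<subseteq> {f\<in>A. L f \<le> 1}"
    and net: "\<And>f. f \<in> A \<Longrightarrow> L f \<le> 1 \<Longrightarrow> \<exists>h\<in>F0. \<exists>c. sup_norm (\<lambda>x. f x - h x - c) < d"
    using lip_norm_finite_net_mod_constants[OF L_lip \<open>d > 0\<close>] by blast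
  have cont: "continuous_on UNIV f" if "f \<in> A" for f
    using that A_sub unfolding CX_def by auto
  have shifted: "\<exists>h\<in>(\<lambda>h x. s * h x) ` F0. \<exists>c. \<forall>x. \<bar>f x - h x - c\<bar> < s * d" if "f \<in> F" for f
  proof -
    have fA: "f \<in> A" using that F_sub by auto
    have "L (\<lambda>x. (1/s) * f x) \<le> 1"
      using lip_norm_scale[OF L_lip fA, of "1/s"] F_L[OF that] \<open>s > 0\<close> \<open>k \<le> s\<close>
      by (simp add: divide_le_eq_1)
    then obtain h c where h: "h \<in> F0" and hc: "sup_norm (\<lambda>x. (1/s) * f x - h x - c) < d"
      using net A_scale[OF fA] by blast
    have "\<bar>f x - s * h x - s * c\<bar> < s * d" for x
    proof -
      have "continuous_on UNIV (\<lambda>x. (1/s) * f x - h x - c)"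
        using h F0(2) by (intro continuous_intros cont fA) auto
      then have "\<bar>(1/s) * f x - h x - c\<bar> < d"
        using abs_le_sup_norm[OF X_compact] hc by (meson le_less_trans)
      moreover have "f x - s * h x - s * c = s * ((1/s) * f x - h x - c)"
        using \<open>s > 0\<close> by (simp add: algebra_simps)
      ultimately show ?thesis
        using \<open>s > 0\<close> by (simp add: abs_mult)
    qed
    then show ?thesis
      using h by (intro bexI[of _ "\<lambda>x. s * h x"] exI[of _ "s * c"]) auto
  qed
  have "finite ((\<lambda>h x. s * h x) ` F0)" "s * d > 0"
    using F0(1) \<open>s > 0\<close> \<open>d > 0\<close> by auto
  then show ?thesis
    unfolding \<open>3 * (s * d) = e\<close>[symmetric]
    using F_bounded shifted by (rule finite_net_of_shifted_net)
qed

lemma pointwise_Max_mem_L_le: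
  fixes A S :: "('a \<Rightarrow> real) set" and L :: "('a \<Rightarrow> real) \<Rightarrow> real"
  assumes "finite S" "S \<noteq> {}" "S \<subseteq> A"
    and A_max: "\<And>f g. f \<in> A \<Longrightarrow> g \<in> A \<Longrightarrow> (\<lambda>x. max (f x) (g x)) \<in> A"
    and L_max: "\<And>f g. f \<in> A \<Longrightarrow> g \<in> A \<Longrightarrow> L (\<lambda>x. max (f x) (g x)) \<le> max (L f) (L g)"
    and "\<And>f. f \<in> S \<Longrightarrow> L f \<le> k"
  shows "(\<lambda>x. Max ((\<lambda>f. f x) ` S)) \<in> A \<and> L (\<lambda>x. Max ((\<lambda>f. f x) ` S)) \<le> k"
  using assms(1,2,3,6)
proof (induction S rule: finite_ne_induct)
  case (singleton f)
  then show ?case by auto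
next
  case (insert f S)
  let ?M = "\<lambda>x. Max ((\<lambda>f. f x) ` S)"
  have eq: "(\<lambda>x. Max ((\<lambda>f. f x) ` insert f S)) = (\<lambda>x. max (f x) (?M x))"
    using insert.hyps by auto
  have "f \<in> A" "L f \<le> k" "?M \<in> A" "L ?M \<le> k"
    using insert.IH insert.prems by auto
  then show ?case
    unfolding eq using A_max L_max by (meson max.boundedI order_trans)
qed

lemma Max_approx_Sup:
  fixes T U :: "real set"
  assumes "finite T" "T \<noteq> {}" "T \<subseteq> U" "bdd_above U"
    and "\<And>u. u \<in> U \<Longrightarrow> \<exists>t\<in>T. u \<le> t + e"
  shows "\<bar>Max T - Sup U\<bar> \<le> e"
proof -
  have "Max T \<le> Sup U"
    using assms(1-4) Max_in by (blast intro: cSup_upper)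
  moreover have "Sup U \<le> Max T + e"
    using assms by (intro cSup_least) (auto, meson Max_ge add_right_mono order_trans)
  ultimately show ?thesis by linarith
qed

lemma pointwise_Max_approx_SUP:
  fixes F S :: "('a \<Rightarrow> real) set"
  assumes "finite S" "S \<noteq> {}" "S \<subseteq> F" "bdd_above ((\<lambda>f. f x) ` F)"
    and net: "\<forall>f\<in>F. \<exists>f'\<in>S. \<forall>x. \<bar>f x - f' x\<bar> < e"
  shows "\<bar>Max ((\<lambda>f. f x) ` S) - (SUP f\<in>F. f x)\<bar> \<le> e"
proof (rule Max_approx_Sup)
  show "finite ((\<lambda>f. f x) ` S)" "(\<lambda>f. f x) ` S \<noteq> {}" "(\<lambda>f. f x) ` S \<subseteq> (\<lambda>f. f x) ` F"
    using assms(1-3) by auto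
  show "bdd_above ((\<lambda>f. f x) ` F)"
    by (fact assms(4))
  fix u assume "u \<in> (\<lambda>f. f x) ` F"
  then obtain f f' where "u = f x" "f' \<in> S" "\<bar>f x - f' x\<bar> < e"
    using net by blast
  then show "\<exists>t\<in>(\<lambda>f. f x) ` S. u \<le> t + e"
    by force
qed

lemma SUP_uniform_approx_by_L_bounded:
  fixes F :: "('a::topological_space \<Rightarrow> real) set"
  assumes X_compact: "compact (UNIV :: 'a set)"
    and A_sub: "A \<subseteq> CX"
    and A_scale: "\<And>f c. f \<in> A \<Longrightarrow> (\<lambda>x. c * f x) \<in> A"
    and L_lip: "lip_norm A L"
    and A_max: "\<And>f g. f \<in> A \<Longrightarrow> g \<in> A \<Longrightarrow> (\<lambda>x. max (f x) (g x)) \<in> A"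
    and L_max: "\<And>f g. f \<in> A \<Longrightarrow> g \<in> A \<Longrightarrow> L (\<lambda>x. max (f x) (g x)) \<le> max (L f) (L g)"
    and F_ne: "F \<noteq> {}"
    and F_sub: "F \<subseteq> A"
    and F_bounded: "\<And>f x. f \<in> F \<Longrightarrow> \<bar>f x\<bar> \<le> B"
    and F_L: "\<And>f. f \<in> F \<Longrightarrow> L f \<le> k"
    and "e > 0"
  shows "\<exists>M\<in>A. L M \<le> k \<and> (\<forall>x. \<bar>M x - (SUP f\<in>F. f x)\<bar> \<le> e)"
proof -
  have bdd: "bdd_above ((\<lambda>f. f x) ` F)" for x
    by (rule bdd_aboveI[of _ B]) (auto dest: F_bounded[THEN abs_le_D1])
  have "\<exists>S. finite S \<and> S \<subseteq> F \<and> (\<forall>f\<in>F. \<exists>f'\<in>S. \<forall>x. \<bar>f x - f' x\<bar> < e)"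
    using lip_norm_finite_net[where B = B, OF X_compact A_sub A_scale L_lip F_sub _ F_L \<open>e > 0\<close>]
      F_bounded by blast
  then obtain S where S: "finite S" "S \<subseteq> F" "\<forall>f\<in>F. \<exists>f'\<in>S. \<forall>x. \<bar>f x - f' x\<bar> < e"
    by blast
  then have "S \<noteq> {}"
    using F_ne by blast
  have "(\<lambda>x. Max ((\<lambda>f. f x) ` S)) \<in> A \<and> L (\<lambda>x. Max ((\<lambda>f. f x) ` S)) \<le> k"
    by (rule pointwise_Max_mem_L_le[where A = A and L = L, OF S(1) \<open>S \<noteq> {}\<close> _ A_max L_max])
      (use S(2) F_sub F_L in auto)
  with pointwise_Max_approx_SUP[OF S(1) \<open>S \<noteq> {}\<close> S(2) bdd S(3)] show ?thesis
    by blast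
qed

lemma continuous_on_if_uniformly_approximable:
  fixes g :: "'a::topological_space \<Rightarrow> 'b::metric_space"
  assumes "\<And>e. e > 0 \<Longrightarrow> \<exists>M. continuous_on S M \<and> (\<forall>x\<in>S. dist (M x) (g x) \<le> e)"
  shows "continuous_on S g"
proof -
  obtain M where M: "\<And>e. e > 0 \<Longrightarrow> continuous_on S (M e) \<and> (\<forall>x\<in>S. dist (M e x) (g x) \<le> e)"
    using assms by metis
  have "uniform_limit S M g (at_right 0)"
    unfolding uniform_limit_iff eventually_at_right_field
    using M by (meson le_less_trans)
  moreover have "\<forall>\<^sub>F e in at_right 0. continuous_on S (M e)"
    unfolding eventually_at_right_field using M by (auto intro: zero_less_one)
  ultimately show ?thesis
    by (intro uniform_limit_theorem) auto
qed

lemma L1bar_if_uniformly_approximable: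
  assumes "h \<in> CX" "\<And>e. e > 0 \<Longrightarrow> \<exists>f\<in>A. L f \<le> 1 \<and> (\<forall>x. \<bar>f x - h x\<bar> \<le> e)"
  shows "h \<in> L1bar A L"
  unfolding L1bar_def
proof (intro CollectI conjI allI impI \<open>h \<in> CX\<close>)
  fix e :: real assume "e > 0"
  then obtain f where "f \<in> A" "L f \<le> 1" "\<And>x. \<bar>f x - h x\<bar> \<le> e / 2"
    using assms(2)[of "e / 2"] by auto
  then show "\<exists>f\<in>A. L f \<le> 1 \<and> sup_norm (\<lambda>x. f x - h x) < e"
    using sup_norm_le[of "\<lambda>x. f x - h x" "e / 2"] \<open>e > 0\<close> by force
qed

lemma Lbar_le_if_uniformly_approximable:
  assumes L_lip: "lip_norm A L"
    and A_scale: "\<And>f c. f \<in> A \<Longrightarrow> (\<lambda>x. c * f x) \<in> A"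
    and "g \<in> CX"
    and approx: "\<And>e. e > 0 \<Longrightarrow> \<exists>M\<in>A. L M \<le> k \<and> (\<forall>x. \<bar>M x - g x\<bar> \<le> e)"
  shows "Lbar A L g \<le> ereal k"
proof -
  have "0 \<le> k"
    using approx[of 1] lip_norm_nonneg[OF L_lip] by force
  have Lbar_le: "Lbar A L g \<le> ereal r" if "k < r" for r
  proof -
    have "r > 0" using that \<open>0 \<le> k\<close> by linarith
    have "(\<lambda>x. (1/r) * g x) \<in> L1bar A L"
    proof (rule L1bar_if_uniformly_approximable)
      show "(\<lambda>x. (1/r) * g x) \<in> CX"
        using \<open>g \<in> CX\<close> continuous_on_mult_left[of UNIV g "1/r"] unfolding CX_def by simp
      fix e :: real assume "e > 0"
      then obtain M where M: "M \<in> A" "L M \<le> k" "\<And>x. \<bar>M x - g x\<bar> \<le> r * e"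
        using approx[of "r * e"] \<open>r > 0\<close> by auto
      have "L (\<lambda>x. (1/r) * M x) \<le> 1"
        using lip_norm_scale[OF L_lip M(1), of "1/r"] M(2) \<open>k < r\<close> \<open>r > 0\<close> by simp
      moreover have "\<bar>(1/r) * M x - (1/r) * g x\<bar> \<le> e" for x
      proof -
        have "\<bar>(1/r) * M x - (1/r) * g x\<bar> = \<bar>M x - g x\<bar> / r"
          using \<open>r > 0\<close> by (simp add: diff_divide_distrib[symmetric])
        also have "\<dots> \<le> e"
          using M(3)[of x] \<open>r > 0\<close> by (simp add: divide_le_eq mult.commute)
        finally show ?thesis .
      qed
      ultimately show "\<exists>f\<in>A. L f \<le> 1 \<and> (\<forall>x. \<bar>f x - (1/r) * g x\<bar> \<le> e)"
        using A_scale[OF M(1)] by blast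
    qed
    then have "g \<in> (\<lambda>f x. r * f x) ` L1bar A L"
      by (rule image_eqI[rotated]) (use \<open>r > 0\<close> in auto)
    then have "ereal r \<in> {ereal r | r. 0 \<le> r \<and> g \<in> (\<lambda>f x. r * f x) ` L1bar A L}"
      using \<open>r > 0\<close> less_imp_le by blast
    then show ?thesis
      unfolding Lbar_def by (rule Inf_lower)
  qed
  show ?thesis
  proof (rule ereal_le_epsilon2)
    fix e :: real assume "e > 0"
    then have "Lbar A L g \<le> ereal (k + e)"
      by (intro Lbar_le) simp
    then show "Lbar A L g \<le> ereal k + ereal e"
      by simp
  qed
qed

theorem lemma8p2:
  fixes A :: "('a::topological_space \<Rightarrow> real) set"
    and L :: "('a \<Rightarrow> real) \<Rightarrow> real"
    and \<F> :: "('a \<Rightarrow> real) set"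
    and k :: real
  assumes X_compact: "compact (UNIV :: 'a set)"
    and A_sub: "A \<subseteq> CX"
    and A_add: "\<And>f g. f \<in> A \<Longrightarrow> g \<in> A \<Longrightarrow> (\<lambda>x. f x + g x) \<in> A"
    and A_scale: "\<And>f c. f \<in> A \<Longrightarrow> (\<lambda>x. c * f x) \<in> A"
    and A_dense: "\<And>h e. h \<in> CX \<Longrightarrow> e > 0 \<Longrightarrow> \<exists>f\<in>A. sup_norm (\<lambda>x. f x - h x) < e"
    and A_const: "\<And>c. (\<lambda>x. c) \<in> A"
    and A_max: "\<And>f g. f \<in> A \<Longrightarrow> g \<in> A \<Longrightarrow> (\<lambda>x. max (f x) (g x)) \<in> A"
    and A_min: "\<And>f g. f \<in> A \<Longrightarrow> g \<in> A \<Longrightarrow> (\<lambda>x. min (f x) (g x)) \<in> A"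
    and L_lip: "lip_norm A L"
    and L_max: "\<And>f g. f \<in> A \<Longrightarrow> g \<in> A \<Longrightarrow> L (\<lambda>x. max (f x) (g x)) \<le> max (L f) (L g)"
    and F_ne: "\<F> \<noteq> {}"
    and F_sub: "\<F> \<subseteq> A"
    and F_bdd: "\<exists>B. \<forall>f\<in>\<F>. sup_norm f \<le> B"
    and F_L: "\<And>f. f \<in> \<F> \<Longrightarrow> L f \<le> k"
  shows "(\<lambda>x. SUP f\<in>\<F>. f x) \<in> CX \<and> Lbar A L (\<lambda>x. SUP f\<in>\<F>. f x) \<le> ereal k"
proof -
  define g where "g = (\<lambda>x. SUP f\<in>\<F>. f x)"
  have cont: "continuous_on UNIV f" if "f \<in> A" for f
    using that A_sub unfolding CX_def by auto
  obtain B0 where B0: "\<forall>f\<in>\<F>. sup_norm f \<le> B0"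
    using F_bdd by blast
  have B: "\<bar>f x\<bar> \<le> B0" if "f \<in> \<F>" for f x
  proof -
    have "\<bar>f x\<bar> \<le> sup_norm f"
      using that F_sub by (intro abs_le_sup_norm[OF X_compact] cont) blast
    also have "\<dots> \<le> B0"
      using B0 that by blast
    finally show ?thesis .
  qed
  have approx: "\<exists>M\<in>A. L M \<le> k \<and> (\<forall>x. \<bar>M x - g x\<bar> \<le> e)" if "e > 0" for e
    unfolding g_def
    using SUP_uniform_approx_by_L_bounded[where A = A and L = L and B = B0,
        OF X_compact A_sub A_scale L_lip A_max L_max F_ne F_sub _ F_L \<open>e > 0\<close>] B
    by blast
  have "g \<in> CX"
    unfolding CX_def
  proof (intro CollectI continuous_on_if_uniformly_approximable)
    fix e :: real assume "e > 0"
    then obtain M where "M \<in> A" "\<forall>x. \<bar>M x - g x\<bar> \<le> e"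
      using approx by blast
    then show "\<exists>M. continuous_on UNIV M \<and> (\<forall>x\<in>UNIV. dist (M x) (g x) \<le> e)"
      using cont by (auto simp: dist_real_def)
  qed
  moreover have "Lbar A L g \<le> ereal k"
    by (rule Lbar_le_if_uniformly_approximable[OF L_lip A_scale \<open>g \<in> CX\<close> approx])
  ultimately show ?thesis
    unfolding g_def by blast
qed

end
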